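(* Let $\alpha\in\Delta_+$, and let $r,s,k\in\mathbb{Z}_{>0}$ and $K\in\mathbb{Z}_{\ge0}$ satisfy $r+s\ge kr+K$. Then, in $U(\mathfrak{sl}_{2,\alpha}[t])$, \[\big[e_\alpha,\ {}_kf_\alpha(r,s)\big]\in \sum_{(r',s')}U\big(t\,\mathfrak{sl}_{2,\alpha}[t]\big)\,{}_kf_\alpha(r',s')+U\big(t\,\mathfrak{sl}_{2,\alpha}[t]\big)\,t\mathfrak{b}_\alpha[t],\] where the sum runs over all pairs $r',s'\in\mathbb{Z}_{>0}$ with $r'+s'\ge kr'+K$.
   Context: $\mathfrak g=\mathfrak{sl}_{n+1}(\mathbb C)$, positive roots $\Delta_+$; for $\alpha\in\Delta_+$, $e_\alpha,f_\alpha$ are root vectors with $[e_\alpha,f_\alpha]=h_\alpha$ the coroot. $\mathfrak{sl}_{2,\alpha}=\mathbb{C}e_\alpha\oplus\mathbb{C}h_\alpha\oplus\mathbb{C}f_\alpha$, $\mathfrak{b}_\alpha=\mathbb{C}e_\alpha\oplus\mathbb{C}h_\alpha$. For a Lie algebra $\mathfrak a$, $\mathfrak a[t]=\mathfrak a\otimes\mathbb C[t]$ with bracket $[x\otimes f,y\otimes g]=[x,y]\otimes fg$, and $t\mathfrak a[t]=\mathfrak a\otimes t\mathbb C[t]$; $e_\alpha$ denotes $e_\alpha\otimes 1$. For $X$ in a Lie algebra, $X^{(b)}=X^b/b!$. For $r,s\in\mathbb{Z}_{\ge0}$ let $\mathbf{S}(r,s)=\{(b_j)_{j\ge0}: b_j\in\mathbb{Z}_{\ge0},\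 \sum_j b_j=r,\ \sum_j jb_j=s\}$, and for $k\in\mathbb Z_{\ge0}$ let ${}_k\mathbf{S}(r,s)$ be the subset with $b_j=0$ for all $j<k$. For $x\in\mathfrak g$ define ${}_kx(r,s)=\sum_{(b_j)\in{}_k\mathbf{S}(r,s)}(x\otimes t^k)^{(b_k)}(x\otimes t^{k+1})^{(b_{k+1})}\cdots(x\otimes t^s)^{(b_s)}\in U(\mathfrak g[t])$ (zero if the index set is empty). *)

theory Defs
  imports Complex_Main "HOL-Library.Function_Algebras"
begin

text \<open>Generators of the loop algebra sl2[t] (the copy sl_{2,alpha}[t] inside sl_{n+1}[t]):
  E j = e_alpha (x) t^j, H j = h_alpha (x) t^j, F j = f_alpha (x) t^j.\<close>
datatype gen = E nat | H nat | F nat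

fun deg :: "gen \<Rightarrow> nat" where
  "deg (E j) = j" | "deg (H j) = j" | "deg (F j) = j"

text \<open>Free associative algebra over C on the generators: coefficient functions on words
  (all elements we construct have finite support); addition is pointwise.\<close>
type_synonym fa = "gen list \<Rightarrow> complex"

definition fa_mult :: "fa \<Rightarrow> fa \<Rightarrow> fa" where
  "fa_mult p q = (\<lambda>w. \<Sum>i\<le>length w. p (take i w) * q (drop i w))"

definition fa_smult :: "complex \<Rightarrow> fa \<Rightarrow> fa" where
  "fa_smult c p = (\<lambda>w. c * p w)"

definition fa_mon :: "gen list \<Rightarrow> fa" where
  "fa_mon u = (\<lambda>w. if w = u then 1 else 0)"

definition fa_one :: fa where "fa_one = fa_mon []"

definition fa_gen :: "gen \<Rightarrow> fa" where "fa_gen g = fa_mon [g]"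

definition fa_pow :: "fa \<Rightarrow> nat \<Rightarrow> fa" where
  "fa_pow p n = ((fa_mult p) ^^ n) fa_one"

definition fa_divpow :: "fa \<Rightarrow> nat \<Rightarrow> fa" where
  "fa_divpow p b = fa_smult (1 / of_nat (fact b)) (fa_pow p b)"

definition fa_comm :: "fa \<Rightarrow> fa \<Rightarrow> fa" where
  "fa_comm p q = fa_mult p q - fa_mult q p"

fun lie_gen :: "gen \<Rightarrow> gen \<Rightarrow> fa" where
  "lie_gen (E a) (E b) = 0"
| "lie_gen (E a) (H b) = fa_smult (-2) (fa_gen (E (a+b)))"
| "lie_gen (E a) (F b) = fa_gen (H (a+b))"
| "lie_gen (H a) (E b) = fa_smult 2 (fa_gen (E (a+b)))"
| "lie_gen (H a) (H b) = 0"
| "lie_gen (H a) (F b) = fa_smult (-2) (fa_gen (F (a+b)))"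
| "lie_gen (F a) (E b) = fa_smult (-1) (fa_gen (H (a+b)))"
| "lie_gen (F a) (H b) = fa_smult 2 (fa_gen (F (a+b)))"
| "lie_gen (F a) (F b) = 0"

definition rel :: "gen \<Rightarrow> gen \<Rightarrow> fa" where
  "rel g1 g2 = fa_comm (fa_gen g1) (fa_gen g2) - lie_gen g1 g2"

text \<open>Spanning set of the two-sided ideal defining U(sl2[t]) as a quotient of the free algebra.\<close>
definition U_rels :: "fa set" where
  "U_rels = {fa_mult (fa_mon u) (fa_mult (rel g1 g2) (fa_mon v)) | u v g1 g2. True}"

inductive_set fa_span :: "fa set \<Rightarrow> fa set" for S :: "fa set" where
  span_zero: "0 \<in> fa_span S"
| span_base: "x \<in> S \<Longrightarrow> x \<in> fa_span S"
| span_add: "x \<in> fa_span S \<Longrightarrow> y \<in> fa_span S \<Longrightarrow> x + y \<in> fa_span S"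
| span_smult: "x \<in> fa_span S \<Longrightarrow> fa_smult c x \<in> fa_span S"

text \<open>Words in generators of t sl2[t] (positive degree); their images span U(t sl2[t]).\<close>
definition pos_word :: "gen list \<Rightarrow> bool" where
  "pos_word u = (\<forall>g\<in>set u. 1 \<le> deg g)"

fun is_borel :: "gen \<Rightarrow> bool" where
  "is_borel (E _) = True" | "is_borel (H _) = True" | "is_borel (F _) = False"

text \<open>k S(r,s): sequences (b_j) with b_j = 0 for j < k, sum b_j = r, sum j b_j = s
  (b_j = 0 for j > s is automatic when j b_j <= s, j \<ge> 1; for j = 0 > s impossible).\<close>
definition kS :: "nat \<Rightarrow> nat \<Rightarrow> nat \<Rightarrow> (nat \<Rightarrow> nat) set" where
  "kS k r s = {b. (\<forall>j. (j < k \<or> s < j) \<longrightarrow> b j = 0) \<and> (\<Sum>j\<le>s. b j) = r \<and> (\<Sum>j\<le>s. j * b j) = s}"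

text \<open>k x(r,s) for x given by X j = x (x) t^j (here x = f: X = F).\<close>
definition kx :: "(nat \<Rightarrow> gen) \<Rightarrow> nat \<Rightarrow> nat \<Rightarrow> nat \<Rightarrow> fa" where
  "kx X k r s = (\<Sum>b\<in>kS k r s.
      foldr (\<lambda>j acc. fa_mult (fa_divpow (fa_gen (X j)) (b j)) acc) [k..<Suc s] fa_one)"

end

theory Submission
  imports Defs "HOL-Library.Poly_Mapping"
begin

text \<open>In any algebra where the f_j
  commute, [h_a, f_b] = -2 f_(a+b) and [e_a, f_b] = h_(a+b), the element P(r, s) = kf(r, s) is the
  coefficient of u^r z^s in exp (u \<Sum>_(j\<ge>k) f_j z^j); differentiating in u and in z gives the
  Euler identities
    \<Sum>_j f_j P(r-1, s-j) = r P(r, s)   and   \<Sum>_j j f_j P(r-1, s-j) = s P(r, s).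
  Induction on r then gives [h_a, P(r, s)] = -2 \<Sum>_j f_(a+j) P(r-1, s-j) and
    [e_0, P(r, s)] = \<Sum>_j P(r-1, s-j) h_j - \<Sum>_(i,j) f_(i+j) P(r-2, s-i-j).
  Grouping the double sum by m = i + j and using the Euler identities once more,
    [e_0, P(r, s)] = \<Sum>_j P(r-1, s-j) h_j - (s - (2k-1)(r-1)) P(r-1, s)
                     - \<Sum>_(m<2k-1) (2k-1-m) f_m P(r-2, s-m),
  and r + s \<ge> k r + K places every one of these terms in the target space.\<close>

section \<open>Weighted compositions\<close>

lemma kS_vanish: "b \<in> kS k r s \<Longrightarrow> j < k \<or> s < j \<Longrightarrow> b j = 0"
  by (auto simp: kS_def)

lemma kS_sums_atMost:
  assumes "b \<in> kS k r s" and "s \<le> N"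
  shows "(\<Sum>j\<le>N. b j) = r" and "(\<Sum>j\<le>N. j * b j) = s"
proof -
  have "(\<Sum>j\<le>N. w j * b j) = (\<Sum>j\<le>s. w j * b j)" for w :: "nat \<Rightarrow> nat"
    by (rule sum.mono_neutral_right) (use assms in \<open>auto simp: kS_vanish\<close>)
  from this[of "\<lambda>_. 1"] this[of id] show "(\<Sum>j\<le>N. b j) = r" and "(\<Sum>j\<le>N. j * b j) = s"
    using assms(1) by (simp_all add: kS_def)
qed

lemma kS_memI:
  assumes "\<And>j. j < k \<or> s < j \<Longrightarrow> b j = 0" and "s \<le> N"
    and "(\<Sum>j\<le>N. b j) = r" and "(\<Sum>j\<le>N. j * b j) = s"
  shows "b \<in> kS k r s"
proof -
  have "(\<Sum>j\<le>N. w j * b j) = (\<Sum>j\<le>s. w j * b j)" for w :: "nat \<Rightarrow> nat"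
    by (rule sum.mono_neutral_right) (use assms in auto)
  from this[of "\<lambda>_. 1"] this[of id] show ?thesis
    using assms by (simp add: kS_def)
qed

lemma kS_sums_Icc:
  assumes "b \<in> kS k r s"
  shows "(\<Sum>j\<in>{k..s}. b j) = r" and "(\<Sum>j\<in>{k..s}. j * b j) = s"
proof -
  have "(\<Sum>j\<le>s. w j * b j) = (\<Sum>j\<in>{k..s}. w j * b j)" for w :: "nat \<Rightarrow> nat"
    by (rule sum.mono_neutral_right) (use assms in \<open>auto simp: kS_vanish\<close>)
  from this[of "\<lambda>_. 1"] this[of id] show "(\<Sum>j\<in>{k..s}. b j) = r" and "(\<Sum>j\<in>{k..s}. j * b j) = s"
    using kS_sums_atMost[OF assms order_refl] by simp_all
qed

lemma finite_kS: "finite (kS k r s)"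
proof (rule finite_subset)
  show "kS k r s \<subseteq> {b. \<forall>j. (j \<in> {..s} \<longrightarrow> b j \<in> {..r}) \<and> (j \<notin> {..s} \<longrightarrow> b j = 0)}"
  proof (intro subsetI CollectI allI conjI impI)
    fix b j assume b: "b \<in> kS k r s" and "j \<in> {..s}"
    then have "b j \<le> (\<Sum>i\<le>s. b i)" by (intro member_le_sum) auto
    then show "b j \<in> {..r}" using kS_sums_atMost(1)[OF b order_refl] by simp
  qed (auto simp: kS_vanish)
  show "finite {b. \<forall>j. (j \<in> {..s} \<longrightarrow> b j \<in> {..r}) \<and> (j \<notin> {..s} \<longrightarrow> b j = (0::nat))}"
    by (intro finite_set_of_finite_funs) auto
qed

lemma kS_0_left: "kS k 0 s = (if s = 0 then {\<lambda>_. 0} else {})"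
  by (auto simp: kS_def fun_eq_iff) (metis not_gr_zero)

lemma kS_nonempty_imp_le:
  assumes "b \<in> kS k r s"
  shows "k * r \<le> s"
proof -
  have "k * r = (\<Sum>j\<in>{k..s}. k * b j)"
    by (simp add: kS_sums_Icc(1)[OF assms] flip: sum_distrib_left)
  also have "\<dots> \<le> (\<Sum>j\<in>{k..s}. j * b j)" by (intro sum_mono) auto
  also have "\<dots> = s" by (rule kS_sums_Icc(2)[OF assms])
  finally show ?thesis .
qed

lemma sum_weighted_upd_Suc:
  fixes w b :: "nat \<Rightarrow> nat"
  assumes "finite A" and "j \<in> A"
  shows "(\<Sum>l\<in>A. w l * (b(j := Suc (b j))) l) = (\<Sum>l\<in>A. w l * b l) + w j"
proof -
  have "(\<Sum>l\<in>A - {j}. w l * (b(j := Suc (b j))) l) = (\<Sum>l\<in>A - {j}. w l * b l)"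
    by (rule sum.cong) auto
  then show ?thesis by (simp add: sum.remove[OF assms])
qed

text \<open>Raising the multiplicity of \<open>f \<otimes> t\<^sup>j\<close> by one maps \<open>kS k (r - 1) (s - j)\<close> onto
  the elements of \<open>kS k r s\<close> that use \<open>j\<close>.\<close>

lemma bump_in_kS:
  assumes b: "b \<in> kS k (r - 1) (s - j)" and "0 < r" "k \<le> j" "j \<le> s"
  shows "b(j := Suc (b j)) \<in> kS k r s"
proof (rule kS_memI[of _ _ _ s])
  show "(\<Sum>l\<le>s. (b(j := Suc (b j))) l) = r" "(\<Sum>l\<le>s. l * (b(j := Suc (b j))) l) = s"
    using sum_weighted_upd_Suc[of "{..s}" j "\<lambda>_. 1" b] sum_weighted_upd_Suc[of "{..s}" j id b]
      kS_sums_atMost[OF b, of s] assms(2-) by simp_all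
qed (use assms in \<open>auto simp: kS_vanish\<close>)

lemma unbump_in_kS:
  assumes b: "b \<in> kS k r s" and j: "k \<le> j" "j \<le> s" and "0 < b j"
  shows "b(j := b j - 1) \<in> kS k (r - 1) (s - j)"
proof -
  let ?b = "b(j := b j - 1)"
  have b_eq: "?b(j := Suc (?b j)) = b" using \<open>0 < b j\<close> by auto
  have sums: "(\<Sum>l\<le>s. ?b l) + 1 = r" "(\<Sum>l\<le>s. l * ?b l) + j = s"
    using sum_weighted_upd_Suc[of "{..s}" j "\<lambda>_. 1" ?b, unfolded b_eq]
      sum_weighted_upd_Suc[of "{..s}" j id ?b, unfolded b_eq] kS_sums_atMost[OF b order_refl] j
    by simp_all
  have "?b l = 0" if "l < k \<or> s - j < l" for l
  proof (cases "s < l \<or> l < k")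
    case True
    then show ?thesis using j kS_vanish[OF b] by auto
  next
    case False
    show ?thesis
    proof (rule ccontr)
      assume "?b l \<noteq> 0"
      then have "l \<le> l * ?b l" by simp
      also have "\<dots> \<le> (\<Sum>i\<le>s. i * ?b i)" using False by (intro member_le_sum) auto
      finally show False using sums(2) that False by linarith
    qed
  qed
  then show ?thesis
    by (rule kS_memI[of _ _ _ s]) (use sums in auto)
qed

lemma bij_betw_bump:
  assumes "0 < r"
  shows "bij_betw (\<lambda>(j, b). (j, b(j := Suc (b j))))
           (SIGMA j:{k..s}. kS k (r - 1) (s - j)) {(j, b). j \<in> {k..s} \<and> b \<in> kS k r s \<and> 0 < b j}"
  by (rule bij_betw_byWitness[where f' = "\<lambda>(j, b). (j, b(j := b j - 1))"])
    (use assms bump_in_kS unbump_in_kS in auto)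

lemma sum_sum_index_add:
  fixes g :: "nat \<Rightarrow> 'a::semiring_1"
  assumes "\<And>m. N < m \<Longrightarrow> g m = 0"
  shows "(\<Sum>i\<in>{k..N}. \<Sum>j\<in>{k..N}. g (i + j)) = (\<Sum>m\<in>{k..N}. of_nat (m + 1 - 2 * k) * g m)"
proof -
  have inner: "(\<Sum>j\<in>{k..N}. g (i + j)) = (\<Sum>m\<in>{k..N}. if k + i \<le> m then g m else 0)"
    if "i \<in> {k..N}" for i
  proof -
    have "(\<Sum>j\<in>{k..N}. g (i + j)) = (\<Sum>m\<in>{k + i..N + i}. g m)"
      unfolding sum.shift_bounds_cl_nat_ivl by (simp add: add.commute)
    also have "\<dots> = (\<Sum>m\<in>{k + i..N}. g m)"
      by (rule sum.mono_neutral_right) (auto simp: assms)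
    also have "\<dots> = (\<Sum>m\<in>{k..N}. if k + i \<le> m then g m else 0)"
      by (simp add: sum.If_cases Int_def) (rule sum.cong; auto)
    finally show ?thesis .
  qed
  have count: "(\<Sum>i\<in>{k..N}. if k + i \<le> m then g m else 0) = of_nat (m + 1 - 2 * k) * g m"
    if "m \<in> {k..N}" for m
  proof -
    have "{i\<in>{k..N}. k + i \<le> m} = {k..m - k}" and "Suc (m - k) - k = m + 1 - 2 * k"
      using that by auto
    then show ?thesis by (simp add: sum.If_cases Int_def)
  qed
  have "(\<Sum>i\<in>{k..N}. \<Sum>j\<in>{k..N}. g (i + j))
      = (\<Sum>i\<in>{k..N}. \<Sum>m\<in>{k..N}. if k + i \<le> m then g m else 0)"
    by (rule sum.cong[OF refl]) (rule inner)
  also have "\<dots> = (\<Sum>m\<in>{k..N}. \<Sum>i\<in>{k..N}. if k + i \<le> m then g m else 0)"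
    by (rule sum.swap)
  also have "\<dots> = (\<Sum>m\<in>{k..N}. of_nat (m + 1 - 2 * k) * g m)"
    by (rule sum.cong) (simp_all add: count)
  finally show ?thesis .
qed

section \<open>Divided powers of the loop elements \<open>f \<otimes> t\<^sup>j\<close>\<close>

definition commutator :: "'a::ring \<Rightarrow> 'a \<Rightarrow> 'a" where
  "commutator x y = x * y - y * x"

lemma commutator_mult_right: "commutator x (y * z) = commutator x y * z + y * commutator x z"
  by (simp add: commutator_def algebra_simps)

lemma commutator_sum_right: "commutator x (sum g A) = (\<Sum>a\<in>A. commutator x (g a))"
  by (simp add: commutator_def sum_distrib_left sum_distrib_right sum_subtractf)

lemma commutator_of_int_mult_right:
  "commutator x (of_int n * y) = of_int n * commutator (x::'a::ring_1) y"
  by (simp add: commutator_def algebra_simps mult_of_int_commute)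

lemma mult_of_int_left_commute: "x * (of_int n * y) = of_int n * (x * (y::'a::ring_1))"
  by (metis mult.assoc mult_of_int_commute)

lemma mult_of_nat_left_commute: "x * (of_nat n * y) = of_nat n * (x * (y::'a::semiring_1))"
  by (metis mult.assoc mult_of_nat_commute)

lemma sum_mult_sum_swap:
  fixes x c :: "_ \<Rightarrow> 'a::semiring_0"
  assumes "\<And>i j. i \<in> B \<Longrightarrow> j \<in> A \<Longrightarrow> x j * c i = c i * x j"
  shows "(\<Sum>j\<in>A. x j * (\<Sum>i\<in>B. c i * y i j)) = (\<Sum>i\<in>B. c i * (\<Sum>j\<in>A. x j * y i j))"
proof -
  have "(\<Sum>j\<in>A. x j * (\<Sum>i\<in>B. c i * y i j)) = (\<Sum>j\<in>A. \<Sum>i\<in>B. c i * (x j * y i j))"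
    unfolding sum_distrib_left
    by (intro sum.cong refl) (metis assms mult.assoc)
  also have "\<dots> = (\<Sum>i\<in>B. c i * (\<Sum>j\<in>A. x j * y i j))"
    by (subst sum.swap) (simp add: sum_distrib_left)
  finally show ?thesis .
qed

lemma sum_truncated_coeff_split:
  fixes X :: "nat \<Rightarrow> 'a::ring_1"
  assumes "0 < k"
  shows "(\<Sum>m\<in>A. of_nat (m + 1 - 2 * k) * X m)
    = (\<Sum>m\<in>A. of_nat m * X m) - of_nat (2 * k - 1) * (\<Sum>m\<in>A. X m)
      + (\<Sum>m\<in>A. of_nat (2 * k - 1 - m) * X m)"
proof -
  have coeff: "(of_nat (m + 1 - 2 * k) :: 'a) = of_nat m - of_nat (2 * k - 1) + of_nat (2 * k - 1 - m)" for m
  proof -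
    have "int (m + 1 - 2 * k) = int m - int (2 * k - 1) + int (2 * k - 1 - m)"
      using assms by linarith
    then have "(of_int (int (m + 1 - 2 * k)) :: 'a) = of_int (int m - int (2 * k - 1) + int (2 * k - 1 - m))"
      by (simp only:)
    then show ?thesis by simp
  qed
  have "(\<Sum>m\<in>A. of_nat (m + 1 - 2 * k) * X m)
      = (\<Sum>m\<in>A. of_nat m * X m - of_nat (2 * k - 1) * X m + of_nat (2 * k - 1 - m) * X m)"
    by (intro sum.cong refl) (simp only: coeff distrib_right left_diff_distrib)
  then show ?thesis
    by (simp only: sum.distrib sum_subtractf sum_distrib_left)
qed

text \<open>\<open>scal\<close> embeds the scalars centrally; only the relations of \<open>sl\<^sub>2[t]\<close> involving \<open>f\<close>
  are assumed.\<close>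

locale sl2_loop_algebra =
  fixes scal :: "complex \<Rightarrow> 'a::ring_1"
    and e h f :: "nat \<Rightarrow> 'a"
  assumes scal_1: "scal 1 = 1"
    and scal_add: "\<And>a b. scal (a + b) = scal a + scal b"
    and scal_mult: "\<And>a b. scal (a * b) = scal a * scal b"
    and scal_commute: "\<And>c x. scal c * x = x * scal c"
    and commutator_e_f: "\<And>a b. commutator (e a) (f b) = h (a + b)"
    and commutator_h_f: "\<And>a b. commutator (h a) (f b) = - (2 * f (a + b))"
    and f_commute: "\<And>a b. f a * f b = f b * f a"
begin

lemma scal_0: "scal 0 = 0"
  using scal_add[of 0 0] by simp

lemma scal_of_nat: "scal (of_nat n) = of_nat n"
  by (induct n) (simp_all add: scal_0 scal_1 scal_add)

lemma scal_of_int: "scal (of_int n) = of_int n"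
proof -
  have "scal (- c) = - scal c" for c
    using scal_add[of c "- c"] by (simp add: scal_0 add_eq_0_iff)
  then show ?thesis
    by (cases n rule: int_cases) (simp_all only: of_int_of_nat_eq of_int_minus scal_of_nat)
qed

lemma of_int_mult_cancel:
  fixes x y :: 'a
  assumes "n \<noteq> 0" and "of_int n * x = of_int n * y"
  shows "x = y"
proof -
  have inv: "scal (1 / of_int n) * of_int n = 1"
    using assms(1) by (simp flip: scal_of_int scal_mult add: scal_1)
  have "x = scal (1 / of_int n) * (of_int n * x)" by (simp add: mult.assoc[symmetric] inv)
  also have "\<dots> = y" by (simp add: assms(2) mult.assoc[symmetric] inv)
  finally show ?thesis .
qed

definition dpow :: "'a \<Rightarrow> nat \<Rightarrow> 'a" where
  "dpow x n = scal (1 / of_nat (fact n)) * x ^ n"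

definition f_monomial :: "nat \<Rightarrow> nat \<Rightarrow> (nat \<Rightarrow> nat) \<Rightarrow> 'a" where
  "f_monomial k N b = foldr (\<lambda>j acc. dpow (f j) (b j) * acc) [k..<N] 1"

definition kf :: "nat \<Rightarrow> nat \<Rightarrow> nat \<Rightarrow> 'a" where
  "kf k r s = (\<Sum>b\<in>kS k r s. f_monomial k (Suc s) b)"

text \<open>Extended by \<open>0\<close> to negative arguments, so that index shifts need no side conditions.\<close>

definition kf_int :: "nat \<Rightarrow> int \<Rightarrow> int \<Rightarrow> 'a" where
  "kf_int k r t = (if r < 0 \<or> t < 0 then 0 else kf k (nat r) (nat t))"

lemma dpow_0 [simp]: "dpow x 0 = 1"
  by (simp add: dpow_def scal_1)

lemma f_commute_dpow: "f a * dpow (f b) n = dpow (f b) n * f a"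
proof -
  have "f a * f b ^ n = f b ^ n * f a"
    using power_commuting_commutes[of "f b" "f a" n] f_commute by simp
  then show ?thesis
    by (metis dpow_def mult.assoc scal_commute)
qed

lemma f_times_dpow: "f i * dpow (f i) n = of_nat (Suc n) * dpow (f i) (Suc n)"
proof -
  have "complex_of_nat (Suc n) * (1 / of_nat (fact (Suc n))) = 1 / of_nat (fact n)"
    by (simp only: fact_Suc of_nat_mult) (simp add: field_simps del: of_nat_Suc)
  then have c: "of_nat (Suc n) * scal (1 / of_nat (fact (Suc n))) = scal (1 / of_nat (fact n))"
    by (simp flip: scal_of_nat scal_mult)
  have "f i * dpow (f i) n = scal (1 / of_nat (fact n)) * (f i * f i ^ n)"
    by (metis dpow_def mult.assoc scal_commute)
  also have "\<dots> = of_nat (Suc n) * dpow (f i) (Suc n)"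
    by (simp only: dpow_def power_Suc mult.assoc flip: c)
  finally show ?thesis .
qed

lemma f_times_foldr_dpow:
  assumes "distinct js" and "i \<in> set js"
  shows "f i * foldr (\<lambda>j acc. dpow (f j) (b j) * acc) js 1
    = of_nat (Suc (b i)) * foldr (\<lambda>j acc. dpow (f j) ((b(i := Suc (b i))) j) * acc) js 1"
  using assms
proof (induction js)
  case (Cons a js)
  show ?case
  proof (cases "a = i")
    case True
    then have "foldr (\<lambda>j acc. dpow (f j) ((b(i := Suc (b i))) j) * acc) js 1
        = foldr (\<lambda>j acc. dpow (f j) (b j) * acc) js 1"
      using Cons.prems by (intro foldr_cong) auto
    then show ?thesis using True by (simp add: mult.assoc[symmetric] f_times_dpow)
  next
    case False
    have "f i * (dpow (f a) (b a) * foldr (\<lambda>j acc. dpow (f j) (b j) * acc) js 1)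
        = dpow (f a) (b a) * (f i * foldr (\<lambda>j acc. dpow (f j) (b j) * acc) js 1)"
      by (simp only: mult.assoc[symmetric] f_commute_dpow)
    also have "\<dots> = of_nat (Suc (b i)) * (dpow (f a) (b a)
        * foldr (\<lambda>j acc. dpow (f j) ((b(i := Suc (b i))) j) * acc) js 1)"
      using Cons False by (simp del: of_nat_Suc add: mult_of_nat_left_commute)
    finally show ?thesis using False by simp
  qed
qed simp

lemma f_times_f_monomial:
  "k \<le> i \<Longrightarrow> i < N \<Longrightarrow> f i * f_monomial k N b = of_nat (Suc (b i)) * f_monomial k N (b(i := Suc (b i)))"
  by (simp add: f_monomial_def f_times_foldr_dpow)

lemma f_monomial_cong_upper:
  assumes "\<And>j. M \<le> j \<Longrightarrow> b j = 0" and "M \<le> N"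
  shows "f_monomial k N b = f_monomial k M b"
  using assms(2)
proof (induction N)
  case (Suc N)
  then show ?case
    by (cases "M = Suc N") (auto simp: f_monomial_def assms(1))
qed simp

lemma f_monomial_zero: "f_monomial k N (\<lambda>_. 0) = 1"
proof -
  have "foldr (\<lambda>j acc. dpow (f j) 0 * acc) js 1 = 1" for js
    by (induct js) simp_all
  then show ?thesis by (simp add: f_monomial_def)
qed

lemma kf_0_left: "kf k 0 s = (if s = 0 then 1 else 0)"
  by (simp add: kf_def kS_0_left f_monomial_zero)

lemma kf_eq_0: "s < k * r \<Longrightarrow> kf k r s = 0"
  using kS_nonempty_imp_le[of _ k r s] by (fastforce simp: kf_def)

lemma kf_int_nat [simp]: "kf_int k (int r) (int s) = kf k r s"
  by (simp add: kf_int_def)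

lemma kf_int_neg: "r < 0 \<or> t < 0 \<Longrightarrow> kf_int k r t = 0"
  by (simp add: kf_int_def)

lemma kf_int_0_left: "kf_int k 0 t = (if t = 0 then 1 else 0)"
  by (simp add: kf_int_def kf_0_left)

end

section \<open>Euler identities and commutators\<close>

context sl2_loop_algebra
begin

lemma sum_weighted_f_kf:
  assumes "0 < r"
  shows "(\<Sum>j\<in>{k..s}. of_nat (w j) * (f j * kf k (r - 1) (s - j)))
       = (\<Sum>b\<in>kS k r s. of_nat (\<Sum>j\<in>{k..s}. w j * b j) * f_monomial k (Suc s) b)"
proof -
  define g where "g = (\<lambda>(j, b). of_nat (w j * b j) * f_monomial k (Suc s) b :: 'a)"
  have summand: "of_nat (w j) * (f j * kf k (r - 1) (s - j))
      = (\<Sum>b\<in>kS k (r - 1) (s - j). g (j, b(j := Suc (b j))))" if "j \<in> {k..s}" for j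
  proof -
    have "kf k (r - 1) (s - j) = (\<Sum>b\<in>kS k (r - 1) (s - j). f_monomial k (Suc s) b)"
      unfolding kf_def
      by (intro sum.cong refl f_monomial_cong_upper[symmetric]) (auto simp: kS_vanish)
    then show ?thesis
      using that by (simp add: sum_distrib_left g_def f_times_f_monomial mult.assoc del: of_nat_Suc)
  qed
  have "(\<Sum>j\<in>{k..s}. of_nat (w j) * (f j * kf k (r - 1) (s - j)))
      = (\<Sum>j\<in>{k..s}. \<Sum>b\<in>kS k (r - 1) (s - j). g (j, b(j := Suc (b j))))"
    by (intro sum.cong refl summand)
  also have "\<dots> = (\<Sum>(j, b)\<in>(SIGMA j:{k..s}. kS k (r - 1) (s - j)). g (j, b(j := Suc (b j))))"
    by (rule sum.Sigma) (auto simp: finite_kS)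
  also have "\<dots> = sum g {(j, b). j \<in> {k..s} \<and> b \<in> kS k r s \<and> 0 < b j}"
    using sum.reindex_bij_betw[OF bij_betw_bump[OF assms], of g] by (simp add: case_prod_unfold)
  also have "\<dots> = sum g ({k..s} \<times> kS k r s)"
    by (rule sum.mono_neutral_left) (auto simp: finite_kS g_def intro!: gr0I)
  also have "\<dots> = (\<Sum>j\<in>{k..s}. \<Sum>b\<in>kS k r s. g (j, b))"
    by (simp add: sum.cartesian_product)
  also have "\<dots> = (\<Sum>b\<in>kS k r s. \<Sum>j\<in>{k..s}. g (j, b))"
    by (rule sum.swap)
  also have "\<dots> = (\<Sum>b\<in>kS k r s. of_nat (\<Sum>j\<in>{k..s}. w j * b j) * f_monomial k (Suc s) b)"
    by (simp add: g_def sum_distrib_right)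
  finally show ?thesis .
qed

lemma sum_f_kf: "0 < r \<Longrightarrow> (\<Sum>j\<in>{k..s}. f j * kf k (r - 1) (s - j)) = of_nat r * kf k r s"
  using sum_weighted_f_kf[where w = "\<lambda>_. 1"] by (simp add: kS_sums_Icc kf_def sum_distrib_left)

lemma sum_deg_f_kf:
  "0 < r \<Longrightarrow> (\<Sum>j\<in>{k..s}. of_nat j * (f j * kf k (r - 1) (s - j))) = of_nat s * kf k r s"
  using sum_weighted_f_kf[where w = id] by (simp add: kS_sums_Icc kf_def sum_distrib_left)

lemma sum_f_kf_int:
  assumes "t \<le> int N"
  shows "(\<Sum>j\<in>{k..N}. f j * kf_int k (r - 1) (t - int j)) = of_int r * kf_int k r t"
proof (cases "r \<le> 0 \<or> t < 0")
  case True
  then show ?thesis by (cases "r = 0") (auto simp: kf_int_def)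
next
  case False
  define s r' where "s = nat t" and "r' = nat r"
  with False have st: "t = int s" "r = int r'" "0 < r'" by auto
  have "(\<Sum>j\<in>{k..N}. f j * kf_int k (r - 1) (t - int j)) = (\<Sum>j\<in>{k..s}. f j * kf_int k (r - 1) (t - int j))"
    by (rule sum.mono_neutral_right) (use assms st in \<open>auto simp: kf_int_def\<close>)
  also have "\<dots> = (\<Sum>j\<in>{k..s}. f j * kf k (r' - 1) (s - j))"
    by (rule sum.cong) (use st in \<open>auto simp: kf_int_def nat_diff_distrib\<close>)
  also have "\<dots> = of_nat r' * kf k r' s" by (rule sum_f_kf) fact
  finally show ?thesis using st by simp
qed

lemma sum_deg_f_kf_int:
  assumes "t \<le> int N"
  shows "(\<Sum>j\<in>{k..N}. of_nat j * (f j * kf_int k (r - 1) (t - int j))) = of_int t * kf_int k r t"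
proof (cases "r \<le> 0 \<or> t < 0")
  case True
  then show ?thesis by (cases "r = 0") (auto simp: kf_int_def kf_0_left)
next
  case False
  define s r' where "s = nat t" and "r' = nat r"
  with False have st: "t = int s" "r = int r'" "0 < r'" by auto
  have "(\<Sum>j\<in>{k..N}. of_nat j * (f j * kf_int k (r - 1) (t - int j)))
      = (\<Sum>j\<in>{k..s}. of_nat j * (f j * kf_int k (r - 1) (t - int j)))"
    by (rule sum.mono_neutral_right) (use assms st in \<open>auto simp: kf_int_def\<close>)
  also have "\<dots> = (\<Sum>j\<in>{k..s}. of_nat j * (f j * kf k (r' - 1) (s - j)))"
    by (rule sum.cong) (use st in \<open>auto simp: kf_int_def nat_diff_distrib\<close>)
  also have "\<dots> = of_nat s * kf k r' s" by (rule sum_deg_f_kf) fact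
  finally show ?thesis using st by simp
qed

lemma sum_f_times_sum_f_kf_int:
  assumes "t \<le> int N" and "\<And>i. i \<in> B \<Longrightarrow> 0 \<le> d i"
  shows "(\<Sum>j\<in>{k..N}. f j * (\<Sum>i\<in>B. f (c i) * kf_int k (r - 1) (t - int j - d i)))
       = of_int r * (\<Sum>i\<in>B. f (c i) * kf_int k r (t - d i))"
proof -
  have "(\<Sum>j\<in>{k..N}. f j * (\<Sum>i\<in>B. f (c i) * kf_int k (r - 1) (t - int j - d i)))
      = (\<Sum>i\<in>B. f (c i) * (\<Sum>j\<in>{k..N}. f j * kf_int k (r - 1) (t - d i - int j)))"
    by (subst sum_mult_sum_swap) (simp_all add: f_commute algebra_simps)
  also have "\<dots> = (\<Sum>i\<in>B. f (c i) * (of_int r * kf_int k r (t - d i)))"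
    using assms by (intro sum.cong refl arg_cong[where f = "(*) _"] sum_f_kf_int) force
  finally show ?thesis by (simp add: mult_of_int_left_commute sum_distrib_left)
qed

lemma sum_f_times_sum_kf_int:
  assumes "t \<le> int N" and "\<And>i. i \<in> B \<Longrightarrow> 0 \<le> d i"
  shows "(\<Sum>j\<in>{k..N}. f j * (\<Sum>i\<in>B. kf_int k (r - 1) (t - int j - d i) * y i))
       = of_int r * (\<Sum>i\<in>B. kf_int k r (t - d i) * y i)"
proof -
  have "(\<Sum>j\<in>{k..N}. f j * (\<Sum>i\<in>B. kf_int k (r - 1) (t - int j - d i) * y i))
      = (\<Sum>i\<in>B. (\<Sum>j\<in>{k..N}. f j * kf_int k (r - 1) (t - d i - int j)) * y i)"
    by (simp add: sum_distrib_left sum_distrib_right mult.assoc algebra_simps) (rule sum.swap)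
  also have "\<dots> = (\<Sum>i\<in>B. of_int r * kf_int k r (t - d i) * y i)"
    using assms by (intro sum.cong refl arg_cong[where f = "\<lambda>x. x * _"] sum_f_kf_int) force
  finally show ?thesis by (simp add: mult.assoc sum_distrib_left)
qed

text \<open>Both commutator formulas are proved by induction on \<open>r\<close>: multiplying by \<open>r\<close> and using
  \<open>r \<cdot> kf(r, t) = \<Sum>\<^sub>j f\<^sub>j kf(r - 1, t - j)\<close> reduces them to the case \<open>r - 1\<close>; since \<open>r\<close> is a
  unit, it can be cancelled again.\<close>

lemma commutator_h_kf_int:
  "t \<le> int N \<Longrightarrow> commutator (h a) (kf_int k (int r) t)
     = - (2 * (\<Sum>j\<in>{k..N}. f (a + j) * kf_int k (int r - 1) (t - int j)))"
proof (induction r arbitrary: t)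
  case 0
  then show ?case by (simp add: kf_int_0_left kf_int_neg commutator_def)
next
  case (Suc r)
  define n where "n = int (Suc r)"
  have n1: "n - 1 = int r" by (simp add: n_def)
  define S where "S = (\<Sum>j\<in>{k..N}. f (a + j) * kf_int k (int r) (t - int j))"
  have "of_int n * commutator (h a) (kf_int k n t)
      = commutator (h a) (\<Sum>j\<in>{k..N}. f j * kf_int k (int r) (t - int j))"
    unfolding commutator_of_int_mult_right[symmetric] sum_f_kf_int[OF Suc.prems, of k n, unfolded n1] ..
  also have "\<dots> = (\<Sum>j\<in>{k..N}. - (2 * (f (a + j) * kf_int k (int r) (t - int j)))
      - 2 * (f j * (\<Sum>i\<in>{k..N}. f (a + i) * kf_int k (int r - 1) (t - int j - int i))))"
    unfolding commutator_sum_right commutator_mult_right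
    by (intro sum.cong refl) (use Suc in \<open>simp add: commutator_h_f mult.assoc
        mult_of_int_left_commute[of _ 2, simplified]\<close>)
  also have "\<dots> = of_int n * - (2 * S)"
    by (simp add: sum_subtractf sum_negf flip: sum_distrib_left,
        subst sum_f_times_sum_f_kf_int[OF Suc.prems])
      (simp_all add: S_def n_def algebra_simps mult_of_nat_left_commute)
  finally show ?case
    using of_int_mult_cancel[of n] by (simp add: S_def n_def)
qed

lemma h_times_kf_int:
  "t \<le> int N \<Longrightarrow> h a * kf_int k (int r) t
     = kf_int k (int r) t * h a - 2 * (\<Sum>j\<in>{k..N}. f (a + j) * kf_int k (int r - 1) (t - int j))"
  using commutator_h_kf_int[of t N a k r] by (simp add: commutator_def algebra_simps)

lemma sum_f_times_double_sum_f_kf_int: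
  assumes "t \<le> int N"
  shows "(\<Sum>j\<in>{k..N}. f j * (\<Sum>i\<in>{k..N}. \<Sum>l\<in>{k..N}.
            f (a + i + l) * kf_int k (r - 2) (t - int j - int i - int l)))
       = of_int (r - 1) * (\<Sum>i\<in>{k..N}. \<Sum>l\<in>{k..N}. f (a + i + l) * kf_int k (r - 1) (t - int i - int l))"
proof -
  have pairs: "(\<Sum>i\<in>{k..N}. \<Sum>l\<in>{k..N}. f (a + i + l) * kf_int k r' (t' - int i - int l))
      = (\<Sum>p\<in>{k..N} \<times> {k..N}. f (a + fst p + snd p) * kf_int k r' (t' - (int (fst p) + int (snd p))))"
    for r' t' by (simp add: sum.cartesian_product split_def diff_diff_eq)
  have "r - 1 - 1 = r - 2" by simp
  then show ?thesis
    unfolding pairs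
    using sum_f_times_sum_f_kf_int[OF assms, where B = "{k..N} \<times> {k..N}" and k = k
        and d = "\<lambda>p. int (fst p) + int (snd p)" and c = "\<lambda>p. a + fst p + snd p" and r = "r - 1"]
    by simp
qed

lemma commutator_e_kf_int:
  "t \<le> int N \<Longrightarrow> commutator (e a) (kf_int k (int r) t)
     = (\<Sum>j\<in>{k..N}. kf_int k (int r - 1) (t - int j) * h (a + j))
       - (\<Sum>i\<in>{k..N}. \<Sum>j\<in>{k..N}. f (a + i + j) * kf_int k (int r - 2) (t - int i - int j))"
proof (induction r arbitrary: t)
  case 0
  then show ?case by (simp add: kf_int_0_left kf_int_neg commutator_def)
next
  case (Suc r)
  define n where "n = int (Suc r)"
  have n1: "n - 1 = int r" by (simp add: n_def)
  define A where "A = (\<Sum>j\<in>{k..N}. kf_int k (int r) (t - int j) * h (a + j))"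
  define B where "B = (\<Sum>i\<in>{k..N}. \<Sum>j\<in>{k..N}. f (a + i + j) * kf_int k (int r - 1) (t - int i - int j))"
  have "of_int n * commutator (e a) (kf_int k n t)
      = commutator (e a) (\<Sum>j\<in>{k..N}. f j * kf_int k (int r) (t - int j))"
    unfolding commutator_of_int_mult_right[symmetric] sum_f_kf_int[OF Suc.prems, of k n, unfolded n1] ..
  also have "\<dots> = (\<Sum>j\<in>{k..N}. (kf_int k (int r) (t - int j) * h (a + j)
        - 2 * (\<Sum>i\<in>{k..N}. f (a + j + i) * kf_int k (int r - 1) (t - int j - int i)))
      + (f j * (\<Sum>i\<in>{k..N}. kf_int k (int r - 1) (t - int j - int i) * h (a + i))
        - f j * (\<Sum>i\<in>{k..N}. \<Sum>l\<in>{k..N}.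
                   f (a + i + l) * kf_int k (int r - 2) (t - int j - int i - int l))))"
    unfolding commutator_sum_right commutator_mult_right
    by (intro sum.cong refl)
      (use Suc in \<open>simp add: commutator_e_f h_times_kf_int[where N = N] right_diff_distrib\<close>)
  also have "\<dots> = A - 2 * B + of_int (int r) * A - of_int (int r - 1) * B"
    using Suc.prems
    by (simp add: sum.distrib sum_subtractf A_def B_def sum_f_times_double_sum_f_kf_int
        sum_f_times_sum_kf_int[where d = int] flip: sum_distrib_left)
  also have "\<dots> = of_int n * (A - B)"
    by (simp add: n_def algebra_simps mult_2)
  finally show ?case
    using of_int_mult_cancel[of n] by (simp add: A_def B_def n_def)
qed

text \<open>The coefficient \<open>2 * k - 1 - m\<close> uses truncated subtraction, so only \<open>m < 2k - 1\<close>
  contribute to the last sum.\<close>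

lemma commutator_e0_kf:
  assumes "0 < k"
  shows "commutator (e 0) (kf k r s)
    = (\<Sum>j\<in>{k..s}. kf_int k (int r - 1) (int s - int j) * h j)
      - of_int (int s - int (2 * k - 1) * (int r - 1)) * kf_int k (int r - 1) (int s)
      - (\<Sum>m\<in>{k..s}. of_nat (2 * k - 1 - m) * (f m * kf_int k (int r - 2) (int s - int m)))"
proof -
  define X where "X m = f m * kf_int k (int r - 2) (int s - int m)" for m
  have "(\<Sum>i\<in>{k..s}. \<Sum>j\<in>{k..s}. f (i + j) * kf_int k (int r - 2) (int s - int i - int j))
      = (\<Sum>i\<in>{k..s}. \<Sum>j\<in>{k..s}. X (i + j))"
    by (simp add: X_def diff_diff_eq)
  also have "\<dots> = (\<Sum>m\<in>{k..s}. of_nat (m + 1 - 2 * k) * X m)"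
    by (rule sum_sum_index_add) (simp add: X_def kf_int_neg)
  also have "\<dots> = (\<Sum>m\<in>{k..s}. of_nat m * X m) - of_nat (2 * k - 1) * (\<Sum>m\<in>{k..s}. X m)
      + (\<Sum>m\<in>{k..s}. of_nat (2 * k - 1 - m) * X m)"
    by (rule sum_truncated_coeff_split[OF assms])
  also have "\<dots> = of_int (int s - int (2 * k - 1) * (int r - 1)) * kf_int k (int r - 1) (int s)
      + (\<Sum>m\<in>{k..s}. of_nat (2 * k - 1 - m) * X m)"
  proof -
    have "int r - 1 - 1 = int r - 2" by simp
    then have euler: "(\<Sum>m\<in>{k..s}. X m) = of_int (int r - 1) * kf_int k (int r - 1) (int s)"
      and deg_euler: "(\<Sum>m\<in>{k..s}. of_nat m * X m) = of_int (int s) * kf_int k (int r - 1) (int s)"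
      using sum_f_kf_int[of "int s" s k "int r - 1"] sum_deg_f_kf_int[of "int s" s k "int r - 1"]
      by (simp_all only: X_def)
    show ?thesis
      unfolding euler deg_euler
      by (simp only: of_int_diff of_int_mult of_int_of_nat_eq left_diff_distrib mult.assoc)
  qed
  finally show ?thesis
    using commutator_e_kf_int[of "int s" s 0 k r] by (simp add: X_def)
qed

end

section \<open>The enveloping algebra as a quotient of the free algebra\<close>

text \<open>With concatenation as addition of words, \<open>gen list \<Rightarrow>\<^sub>0 complex\<close> is the free associative
  algebra; its coefficient functions are the elements of type \<open>fa\<close>.\<close>

instantiation list :: (type) monoid_add
begin
definition zero_list_def: "0 = []"
definition plus_list_def: "xs + ys = xs @ ys"
instance by standard (auto simp: zero_list_def plus_list_def)
end

type_synonym free_alg = "gen list \<Rightarrow>\<^sub>0 complex"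

abbreviation fa_of :: "free_alg \<Rightarrow> fa" where
  "fa_of \<equiv> Poly_Mapping.lookup"

lemma Sum_any_when_append:
  "(\<Sum>q. (g q when w = l + q)) = (if \<exists>i\<le>length w. l = take i w then g (drop (length l) w) else (0::complex))"
proof (cases "\<exists>i\<le>length w. l = take i w")
  case True
  then obtain i where i: "i \<le> length w" "l = take i w" by blast
  have "(\<Sum>q. g q when w = l + q) = (\<Sum>q. if q = drop (length l) w then g q else 0)"
    by (rule arg_cong[where f = Sum_any], rule ext) (use i in \<open>auto simp: plus_list_def when_def,
        metis append_eq_conv_conj length_take min_absorb2\<close>)
  then show ?thesis using True by simp
next
  case False
  have "w \<noteq> l + q" for q
  proof
    assume "w = l + q"
    then have "l = take (length l) w" "length l \<le> length w" by (auto simp: plus_list_def)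
    with False show False by blast
  qed
  then have "(\<lambda>q. g q when w = l + q) = (\<lambda>_. 0)" by (simp add: when_def fun_eq_iff)
  then have "(\<Sum>q. g q when w = l + q) = (\<Sum>q::'a list. 0)" by (simp only:)
  with False show ?thesis by auto
qed

lemma lookup_times_words:
  fixes p q :: free_alg
  shows "Poly_Mapping.lookup (p * q) w
    = (\<Sum>i\<le>length w. Poly_Mapping.lookup p (take i w) * Poly_Mapping.lookup q (drop i w))"
proof -
  have inj: "inj_on (\<lambda>i. take i w) {..length w}"
    by (rule inj_onI) (metis atMost_iff length_take min_absorb2)
  have "Poly_Mapping.lookup (p * q) w = (\<Sum>l. Poly_Mapping.lookup p l
      * (if \<exists>i\<le>length w. l = take i w then Poly_Mapping.lookup q (drop (length l) w) else 0))"
    unfolding lookup_mult by (subst Sum_any_when_append) (rule refl)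
  also have "\<dots> = (\<Sum>l\<in>(\<lambda>i. take i w) ` {..length w}. Poly_Mapping.lookup p l
      * (if \<exists>i\<le>length w. l = take i w then Poly_Mapping.lookup q (drop (length l) w) else 0))"
    by (rule Sum_any.expand_superset) auto
  also have "\<dots> = (\<Sum>i\<le>length w. Poly_Mapping.lookup p (take i w) * Poly_Mapping.lookup q (drop i w))"
    by (subst sum.reindex[OF inj]) (auto intro!: sum.cong)
  finally show ?thesis .
qed

lemma fa_of_times: "fa_of (p * q) = fa_mult (fa_of p) (fa_of q)"
  by (rule ext) (simp only: lookup_times_words fa_mult_def)

definition word :: "gen list \<Rightarrow> free_alg" where
  "word u = Poly_Mapping.single u 1"

definition letter :: "gen \<Rightarrow> free_alg" where
  "letter g = word [g]"

definition const :: "complex \<Rightarrow> free_alg" where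
  "const c = Poly_Mapping.single [] c"

lemma fa_of_word: "fa_of (word u) = fa_mon u"
  by (rule ext) (auto simp: word_def lookup_single fa_mon_def when_def)

lemma fa_of_letter: "fa_of (letter g) = fa_gen g"
  by (simp add: letter_def fa_of_word fa_gen_def)

lemma word_append: "word u * word v = word (u @ v)"
  by (simp add: word_def mult_single plus_list_def)

lemma word_Nil: "word [] = 1"
  by (metis word_def single_one zero_list_def)

lemma const_1: "const 1 = 1"
  by (metis const_def single_one zero_list_def)

lemma const_add: "const (a + b) = const a + const b"
  by (simp add: const_def single_add)

lemma const_mult: "const (a * b) = const a * const b"
  by (simp add: const_def mult_single plus_list_def)

lemma const_of_int: "const (of_int n) = of_int n"
proof -
  have nat: "const (of_nat m) = of_nat m" for m
    by (induct m) (simp add: const_def, simp add: const_add const_1)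
  have "const (- c) = - const c" for c
    by (simp add: const_def single_uminus)
  with nat show ?thesis
    by (cases n rule: int_cases) (simp_all only: of_int_of_nat_eq of_int_minus)
qed

lemma lookup_const_times: "Poly_Mapping.lookup (const c * p) w = c * Poly_Mapping.lookup p w"
proof (cases w)
  case (Cons x xs)
  have "Poly_Mapping.lookup (const c * p) w
      = (\<Sum>i\<le>Suc (length xs). Poly_Mapping.lookup (const c) (take i w) * Poly_Mapping.lookup p (drop i w))"
    by (simp add: lookup_times_words Cons)
  also have "\<dots> = c * Poly_Mapping.lookup p w"
    by (subst sum.atMost_Suc_shift) (simp add: const_def lookup_single Cons)
  finally show ?thesis .
qed (simp add: lookup_times_words const_def)

lemma lookup_times_const: "Poly_Mapping.lookup (p * const c) w = Poly_Mapping.lookup p w * c"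
proof -
  have "Poly_Mapping.lookup (p * const c) w
      = (\<Sum>i\<in>insert (length w) {..<length w}. Poly_Mapping.lookup p (take i w) * Poly_Mapping.lookup (const c) (drop i w))"
    by (simp add: lookup_times_words lessThan_Suc_atMost[symmetric])
  also have "\<dots> = Poly_Mapping.lookup p w * c" by (simp add: const_def lookup_single)
  finally show ?thesis .
qed

lemma const_commute: "const c * p = p * const c"
  by (rule poly_mapping_eqI) (simp add: lookup_const_times lookup_times_const mult.commute)

lemma fa_of_const_times: "fa_of (const c * p) = fa_smult c (fa_of p)"
  by (rule ext) (simp add: lookup_const_times fa_smult_def)

lemma const_times_word: "const c * word w = Poly_Mapping.single w c"
  by (simp add: const_def word_def mult_single plus_list_def)

lemma poly_mapping_sum_words: "p = (\<Sum>w\<in>Poly_Mapping.keys p. const (Poly_Mapping.lookup p w) * word w)"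
proof (rule poly_mapping_eqI)
  fix x
  have "Poly_Mapping.lookup (\<Sum>w\<in>Poly_Mapping.keys p. const (Poly_Mapping.lookup p w) * word w) x
      = (\<Sum>w\<in>Poly_Mapping.keys p. if w = x then Poly_Mapping.lookup p w else 0)"
    by (simp add: lookup_sum const_times_word lookup_single when_def eq_commute)
  also have "\<dots> = Poly_Mapping.lookup p x" by (subst sum.delta) (auto simp: in_keys_iff)
  finally show "Poly_Mapping.lookup p x
      = Poly_Mapping.lookup (\<Sum>w\<in>Poly_Mapping.keys p. const (Poly_Mapping.lookup p w) * word w) x" ..
qed

lemma sum_fun_apply: "sum g A x = (\<Sum>a\<in>A. g a x)"
  by (induction A rule: infinite_finite_induct) auto

lemma fa_of_sum: "fa_of (sum g A) = (\<Sum>a\<in>A. fa_of (g a))"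
  by (rule ext) (simp add: lookup_sum sum_fun_apply)

lemma fa_of_1: "fa_of 1 = fa_one"
  by (simp add: fa_one_def flip: word_Nil fa_of_word)

lemma fa_of_power: "fa_of (x ^ n) = fa_pow (fa_of x) n"
  by (induct n) (simp_all add: fa_pow_def fa_of_1 fa_of_times)
lemma fa_of_add: "fa_of (x + y) = fa_of x + fa_of y"
  by (rule ext) (simp add: lookup_add)

lemma fa_of_diff: "fa_of (x - y) = fa_of x - fa_of y"
  by (rule ext) (simp add: lookup_minus)

lemma fa_of_0: "fa_of 0 = 0"
  by (rule ext) simp

fun bracket :: "gen \<Rightarrow> gen \<Rightarrow> free_alg" where
  "bracket (E a) (E b) = 0"
| "bracket (E a) (H b) = const (-2) * letter (E (a + b))"
| "bracket (E a) (F b) = letter (H (a + b))"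
| "bracket (H a) (E b) = const 2 * letter (E (a + b))"
| "bracket (H a) (H b) = 0"
| "bracket (H a) (F b) = const (-2) * letter (F (a + b))"
| "bracket (F a) (E b) = const (-1) * letter (H (a + b))"
| "bracket (F a) (H b) = const 2 * letter (F (a + b))"
| "bracket (F a) (F b) = 0"

lemma fa_of_bracket: "fa_of (bracket g1 g2) = lie_gen g1 g2"
  by (cases g1; cases g2) (simp_all add: fa_of_const_times fa_of_letter fa_of_0)

definition relator :: "gen \<Rightarrow> gen \<Rightarrow> free_alg" where
  "relator g1 g2 = letter g1 * letter g2 - letter g2 * letter g1 - bracket g1 g2"

lemma fa_of_relator: "fa_of (relator g1 g2) = rel g1 g2"
  by (simp add: relator_def rel_def fa_comm_def fa_of_diff fa_of_times fa_of_letter fa_of_bracket)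

inductive_set rel_ideal :: "free_alg set" where
  rel_ideal_0: "0 \<in> rel_ideal"
| rel_ideal_relator: "word u * relator g1 g2 * word v \<in> rel_ideal"
| rel_ideal_add: "x \<in> rel_ideal \<Longrightarrow> y \<in> rel_ideal \<Longrightarrow> x + y \<in> rel_ideal"
| rel_ideal_const: "x \<in> rel_ideal \<Longrightarrow> const c * x \<in> rel_ideal"

lemma rel_ideal_uminus: "x \<in> rel_ideal \<Longrightarrow> - x \<in> rel_ideal"
  using rel_ideal_const[of x "-1"] by (simp add: const_of_int[of "-1", simplified])

lemma rel_ideal_diff: "x \<in> rel_ideal \<Longrightarrow> y \<in> rel_ideal \<Longrightarrow> x - y \<in> rel_ideal"
  by (metis diff_conv_add_uminus rel_ideal_add rel_ideal_uminus)

lemma rel_ideal_sum: "(\<And>a. a \<in> A \<Longrightarrow> g a \<in> rel_ideal) \<Longrightarrow> sum g A \<in> rel_ideal"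
  by (induction A rule: infinite_finite_induct) (auto intro: rel_ideal.intros)

lemma rel_ideal_word_times: "x \<in> rel_ideal \<Longrightarrow> word w * x \<in> rel_ideal"
proof (induction rule: rel_ideal.induct)
  case (rel_ideal_relator u g1 g2 v)
  then show ?case
    using rel_ideal.rel_ideal_relator[of "w @ u" g1 g2 v] by (simp add: mult.assoc word_append flip: word_append)
next
  case (rel_ideal_const x c)
  then show ?case by (metis mult.assoc const_commute rel_ideal.rel_ideal_const)
qed (auto simp: distrib_left intro: rel_ideal.intros)

lemma rel_ideal_times_word: "x \<in> rel_ideal \<Longrightarrow> x * word w \<in> rel_ideal"
proof (induction rule: rel_ideal.induct)
  case (rel_ideal_relator u g1 g2 v)
  then show ?case
    using rel_ideal.rel_ideal_relator[of u g1 g2 "v @ w"] by (simp add: mult.assoc word_append)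
qed (auto simp: distrib_right mult.assoc intro: rel_ideal.intros)

lemma rel_ideal_times_left: "x \<in> rel_ideal \<Longrightarrow> a * x \<in> rel_ideal"
proof -
  assume x: "x \<in> rel_ideal"
  have "a * x = (\<Sum>w\<in>Poly_Mapping.keys a. const (Poly_Mapping.lookup a w) * (word w * x))"
    by (subst poly_mapping_sum_words[of a]) (simp add: sum_distrib_right mult.assoc)
  also have "\<dots> \<in> rel_ideal"
    by (intro rel_ideal_sum rel_ideal_const rel_ideal_word_times x)
  finally show ?thesis .
qed

lemma rel_ideal_times_right: "x \<in> rel_ideal \<Longrightarrow> x * a \<in> rel_ideal"
proof -
  assume x: "x \<in> rel_ideal"
  have "x * a = (\<Sum>w\<in>Poly_Mapping.keys a. const (Poly_Mapping.lookup a w) * (x * word w))"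
    by (subst poly_mapping_sum_words[of a], unfold sum_distrib_left)
      (intro sum.cong refl, metis mult.assoc const_commute)
  also have "\<dots> \<in> rel_ideal"
    by (intro rel_ideal_sum rel_ideal_const rel_ideal_times_word x)
  finally show ?thesis .
qed

lemma fa_of_rel_ideal: "x \<in> rel_ideal \<Longrightarrow> fa_of x \<in> fa_span U_rels"
proof (induction rule: rel_ideal.induct)
  case (rel_ideal_relator u g1 g2 v)
  have "fa_of (word u * relator g1 g2 * word v) = fa_mult (fa_mon u) (fa_mult (rel g1 g2) (fa_mon v))"
    by (simp add: mult.assoc fa_of_times fa_of_word fa_of_relator)
  then show ?case by (auto intro!: fa_span.span_base simp: U_rels_def)
next
  case (rel_ideal_add x y)
  then show ?case by (simp only: fa_of_add fa_span.span_add)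
qed (simp_all only: fa_of_0 fa_of_const_times fa_span.intros)

lemma lookup_Nil_rel_ideal: "x \<in> rel_ideal \<Longrightarrow> Poly_Mapping.lookup x [] = 0"
proof (induction rule: rel_ideal.induct)
  case (rel_ideal_relator u g1 g2 v)
  have Nil: "Poly_Mapping.lookup (p * q) [] = Poly_Mapping.lookup p [] * Poly_Mapping.lookup q []"
    for p q :: free_alg
    by (simp add: lookup_times_words)
  have "Poly_Mapping.lookup (letter g) [] = 0" for g
    by (simp add: letter_def word_def lookup_single)
  then have "Poly_Mapping.lookup (relator g1 g2) [] = 0"
    by (cases g1; cases g2) (simp_all add: relator_def lookup_minus Nil lookup_const_times)
  then show ?case by (simp add: Nil)
qed (simp_all add: lookup_add lookup_const_times)

lemma fa_span_mono: "x \<in> fa_span A \<Longrightarrow> A \<subseteq> B \<Longrightarrow> x \<in> fa_span B"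
  by (induction rule: fa_span.induct) (auto intro: fa_span.intros)

definition rel_ideal_eq :: "free_alg \<Rightarrow> free_alg \<Rightarrow> bool" where
  "rel_ideal_eq x y \<longleftrightarrow> x - y \<in> rel_ideal"

lemma equivp_rel_ideal_eq: "equivp rel_ideal_eq"
proof (rule equivpI)
  show "reflp rel_ideal_eq" by (rule reflpI) (simp add: rel_ideal_eq_def rel_ideal_0)
  show "symp rel_ideal_eq"
    by (rule sympI) (metis rel_ideal_eq_def minus_diff_eq rel_ideal_uminus)
  show "transp rel_ideal_eq"
  proof (rule transpI)
    fix x y z assume "rel_ideal_eq x y" "rel_ideal_eq y z"
    then have "(x - y) + (y - z) \<in> rel_ideal" unfolding rel_ideal_eq_def by (rule rel_ideal_add)
    then show "rel_ideal_eq x z" by (simp add: rel_ideal_eq_def)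
  qed
qed

quotient_type Usl2 = free_alg / rel_ideal_eq
  by (rule equivp_rel_ideal_eq)

instantiation Usl2 :: ring_1
begin

lift_definition zero_Usl2 :: Usl2 is 0 .

lift_definition one_Usl2 :: Usl2 is 1 .

lift_definition plus_Usl2 :: "Usl2 \<Rightarrow> Usl2 \<Rightarrow> Usl2" is "(+)"
proof -
  fix a b c d :: free_alg
  assume "rel_ideal_eq a b" "rel_ideal_eq c d"
  then have "(a - b) + (c - d) \<in> rel_ideal" unfolding rel_ideal_eq_def by (rule rel_ideal_add)
  then show "rel_ideal_eq (a + c) (b + d)" by (simp add: rel_ideal_eq_def algebra_simps)
qed

lift_definition uminus_Usl2 :: "Usl2 \<Rightarrow> Usl2" is uminus
proof -
  fix a b :: free_alg
  assume "rel_ideal_eq a b"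
  then have "- (a - b) \<in> rel_ideal" unfolding rel_ideal_eq_def by (rule rel_ideal_uminus)
  then show "rel_ideal_eq (- a) (- b)" by (simp add: rel_ideal_eq_def algebra_simps)
qed

lift_definition minus_Usl2 :: "Usl2 \<Rightarrow> Usl2 \<Rightarrow> Usl2" is "(-)"
proof -
  fix a b c d :: free_alg
  assume "rel_ideal_eq a b" "rel_ideal_eq c d"
  then have "(a - b) - (c - d) \<in> rel_ideal" unfolding rel_ideal_eq_def by (rule rel_ideal_diff)
  then show "rel_ideal_eq (a - c) (b - d)" by (simp add: rel_ideal_eq_def algebra_simps)
qed

lift_definition times_Usl2 :: "Usl2 \<Rightarrow> Usl2 \<Rightarrow> Usl2" is "(*)"
proof -
  fix a b c d :: free_alg
  assume "rel_ideal_eq a b" "rel_ideal_eq c d"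
  then have "(a - b) * c + b * (c - d) \<in> rel_ideal"
    unfolding rel_ideal_eq_def by (intro rel_ideal_add rel_ideal_times_left rel_ideal_times_right)
  then show "rel_ideal_eq (a * c) (b * d)" by (simp add: rel_ideal_eq_def algebra_simps)
qed

instance
proof
  have "(-1 :: free_alg) \<notin> rel_ideal"
    using lookup_Nil_rel_ideal[of "-1"] by (auto simp: lookup_one zero_list_def)
  then show "(0 :: Usl2) \<noteq> 1"
    by transfer (simp add: rel_ideal_eq_def)
qed (transfer; simp add: rel_ideal_eq_def rel_ideal_0 algebra_simps)+

end
definition cls :: "free_alg \<Rightarrow> Usl2" where
  "cls = abs_Usl2"

lemma cls_add: "cls (x + y) = cls x + cls y"
  by (simp add: cls_def plus_Usl2.abs_eq)

lemma cls_mult: "cls (x * y) = cls x * cls y"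
  by (simp add: cls_def times_Usl2.abs_eq)

lemma cls_diff: "cls (x - y) = cls x - cls y"
  by (simp add: cls_def minus_Usl2.abs_eq)

lemma cls_uminus: "cls (- x) = - cls x"
  by (simp add: cls_def uminus_Usl2.abs_eq)

lemma cls_0: "cls 0 = 0"
  by (simp add: cls_def zero_Usl2_def)

lemma cls_1: "cls 1 = 1"
  by (simp add: cls_def one_Usl2_def)

lemma cls_eq_iff: "cls x = cls y \<longleftrightarrow> x - y \<in> rel_ideal"
  by (simp add: cls_def Usl2.abs_eq_iff rel_ideal_eq_def)

lemma cls_sum: "cls (sum g A) = (\<Sum>a\<in>A. cls (g a))"
  by (induction A rule: infinite_finite_induct) (simp_all add: cls_0 cls_add)

lemma cls_power: "cls (x ^ n) = cls x ^ n"
  by (induct n) (simp_all add: cls_1 cls_mult)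

lemma cls_of_int: "cls (of_int n) = of_int n"
proof -
  have "cls (of_nat m) = of_nat m" for m
    by (induct m) (simp_all add: cls_0 cls_1 cls_add)
  then show ?thesis
    by (cases n rule: int_cases) (simp_all only: of_int_of_nat_eq of_int_minus cls_uminus)
qed

lemma ex_cls: "\<exists>x. y = cls x"
  unfolding cls_def by (induct y rule: Usl2.abs_induct) auto

definition scalU :: "complex \<Rightarrow> Usl2" where
  "scalU c = cls (const c)"

definition eU :: "nat \<Rightarrow> Usl2" where
  "eU j = cls (letter (E j))"

definition hU :: "nat \<Rightarrow> Usl2" where
  "hU j = cls (letter (H j))"

definition fU :: "nat \<Rightarrow> Usl2" where
  "fU j = cls (letter (F j))"

lemma commutator_cls_letter: "commutator (cls (letter g1)) (cls (letter g2)) = cls (bracket g1 g2)"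
proof -
  have "relator g1 g2 \<in> rel_ideal"
    using rel_ideal_relator[of "[]" g1 g2 "[]"] by (simp add: word_Nil)
  then have "cls (relator g1 g2) = 0"
    using cls_eq_iff[of _ 0] by (simp add: cls_0)
  then show ?thesis by (simp add: relator_def commutator_def cls_diff cls_mult)
qed

interpretation U: sl2_loop_algebra scalU eU hU fU
proof
  have minus_2: "cls (const (-2)) = -2"
    using const_of_int[of "-2"] cls_of_int[of "-2"] by simp
  show "scalU 1 = 1" by (simp add: scalU_def const_1 cls_1)
  show "scalU (a + b) = scalU a + scalU b" for a b by (simp add: scalU_def const_add cls_add)
  show "scalU (a * b) = scalU a * scalU b" for a b by (simp add: scalU_def const_mult cls_mult)
  show "scalU c * x = x * scalU c" for c x
    using ex_cls[of x] by (auto simp: scalU_def const_commute simp flip: cls_mult)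
  show "commutator (eU a) (fU b) = hU (a + b)" for a b
    by (simp add: eU_def fU_def hU_def commutator_cls_letter)
  show "commutator (hU a) (fU b) = - (2 * fU (a + b))" for a b
    by (simp add: hU_def fU_def commutator_cls_letter cls_mult minus_2)
  show "fU a * fU b = fU b * fU a" for a b
    using commutator_cls_letter[of "F a" "F b"] by (simp add: fU_def commutator_def cls_0)
qed

definition dpow_free :: "free_alg \<Rightarrow> nat \<Rightarrow> free_alg" where
  "dpow_free x n = const (1 / of_nat (fact n)) * x ^ n"

definition kf_free :: "nat \<Rightarrow> nat \<Rightarrow> nat \<Rightarrow> free_alg" where
  "kf_free k r s = (\<Sum>b\<in>kS k r s. foldr (\<lambda>j acc. dpow_free (letter (F j)) (b j) * acc) [k..<Suc s] 1)"

lemma fa_of_kf_free: "fa_of (kf_free k r s) = kx F k r s"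
proof -
  have "fa_of (dpow_free x n) = fa_divpow (fa_of x) n" for x n
    by (simp only: dpow_free_def fa_of_const_times fa_of_power fa_divpow_def)
  then have "fa_of (foldr (\<lambda>j acc. dpow_free (letter (F j)) (b j) * acc) js 1)
      = foldr (\<lambda>j acc. fa_mult (fa_divpow (fa_gen (F j)) (b j)) acc) js fa_one" for b js
    by (induct js) (simp_all add: fa_of_1 fa_of_times fa_of_letter)
  then show ?thesis by (simp add: kf_free_def kx_def fa_of_sum)
qed

lemma cls_kf_free: "cls (kf_free k r s) = U.kf k r s"
proof -
  have "cls (foldr (\<lambda>j acc. dpow_free (letter (F j)) (b j) * acc) js 1)
      = foldr (\<lambda>j acc. U.dpow (fU j) (b j) * acc) js 1" for b js
    by (induct js) (simp_all add: cls_1 cls_mult cls_power dpow_free_def U.dpow_def fU_def flip: scalU_def)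
  then show ?thesis by (simp add: kf_free_def U.kf_def U.f_monomial_def cls_sum)
qed

section \<open>The target subspace\<close>

definition target_gens :: "nat \<Rightarrow> nat \<Rightarrow> fa set" where
  "target_gens k K =
     {fa_mult (fa_mon u) (kx F k r' s') | u r' s'. pos_word u \<and> 0 < r' \<and> 0 < s' \<and> k * r' + K \<le> r' + s'}
     \<union> {fa_mult (fa_mon u) (fa_gen g) | u g. pos_word u \<and> is_borel g \<and> 1 \<le> deg g}"

text \<open>A preimage in the free algebra of
  \<open>\<Sum> U(t sl\<^sub>2[t]) kf(r', s') + U(t sl\<^sub>2[t]) t b[t]\<close>; it contains the relation ideal, so it
  is saturated with respect to the quotient map.\<close>

inductive_set target :: "nat \<Rightarrow> nat \<Rightarrow> free_alg set" for k K where
  target_rel_ideal: "x \<in> rel_ideal \<Longrightarrow> x \<in> target k K"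
| target_kf: "pos_word u \<Longrightarrow> 0 < r' \<Longrightarrow> 0 < s' \<Longrightarrow> k * r' + K \<le> r' + s'
    \<Longrightarrow> word u * kf_free k r' s' \<in> target k K"
| target_borel: "pos_word u \<Longrightarrow> is_borel g \<Longrightarrow> 1 \<le> deg g \<Longrightarrow> word u * letter g \<in> target k K"
| target_add: "x \<in> target k K \<Longrightarrow> y \<in> target k K \<Longrightarrow> x + y \<in> target k K"
| target_const: "x \<in> target k K \<Longrightarrow> const c * x \<in> target k K"

lemma fa_of_target: "x \<in> target k K \<Longrightarrow> fa_of x \<in> fa_span (target_gens k K \<union> U_rels)"
proof (induction rule: target.induct)
  case (target_rel_ideal x)
  then show ?case using fa_of_rel_ideal fa_span_mono by blast
next
  case (target_kf u r' s')
  have "fa_of (word u * kf_free k r' s') = fa_mult (fa_mon u) (kx F k r' s')"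
    by (simp add: fa_of_times fa_of_word fa_of_kf_free)
  with target_kf show ?case
    by (intro fa_span.span_base) (unfold target_gens_def, blast)
next
  case (target_borel u g)
  have "fa_of (word u * letter g) = fa_mult (fa_mon u) (fa_gen g)"
    by (simp add: fa_of_times fa_of_word fa_of_letter)
  with target_borel show ?case
    by (intro fa_span.span_base) (unfold target_gens_def, blast)
next
  case (target_add x y)
  then show ?case by (simp only: fa_of_add fa_span.span_add)
next
  case (target_const x c)
  then show ?case by (simp only: fa_of_const_times fa_span.span_smult)
qed

inductive_set pos_span :: "free_alg set" where
  pos_span_word: "pos_word u \<Longrightarrow> word u \<in> pos_span"
| pos_span_add: "x \<in> pos_span \<Longrightarrow> y \<in> pos_span \<Longrightarrow> x + y \<in> pos_span"
| pos_span_const: "x \<in> pos_span \<Longrightarrow> const c * x \<in> pos_span"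

lemma pos_span_0: "0 \<in> pos_span"
  using pos_span_const[OF pos_span_word[of "[]"], of 0] by (simp add: pos_word_def const_def)

lemma pos_span_1: "1 \<in> pos_span"
  using pos_span_word[of "[]"] by (simp add: pos_word_def word_Nil)

lemma pos_span_sum: "(\<And>a. a \<in> A \<Longrightarrow> g a \<in> pos_span) \<Longrightarrow> sum g A \<in> pos_span"
  by (induction A rule: infinite_finite_induct) (auto intro: pos_span_0 pos_span_add)

lemma pos_span_word_times: "x \<in> pos_span \<Longrightarrow> pos_word u \<Longrightarrow> word u * x \<in> pos_span"
proof (induction rule: pos_span.induct)
  case (pos_span_word v)
  then show ?case by (auto simp: word_append pos_word_def intro!: pos_span.pos_span_word)
next
  case (pos_span_const x c)
  then show ?case by (metis mult.assoc const_commute pos_span.pos_span_const)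
qed (simp add: distrib_left pos_span.pos_span_add)

lemma pos_span_times: "x \<in> pos_span \<Longrightarrow> y \<in> pos_span \<Longrightarrow> x * y \<in> pos_span"
  by (induction rule: pos_span.induct)
    (simp_all add: pos_span_word_times distrib_right mult.assoc pos_span.intros)

lemma kf_free_in_pos_span: "0 < k \<Longrightarrow> kf_free k r s \<in> pos_span"
proof -
  assume "0 < k"
  have "letter (F j) ^ n \<in> pos_span" if "1 \<le> j" for j n
    using that by (induct n) (auto simp: letter_def pos_word_def pos_span_1 intro!: pos_span_times pos_span_word)
  then have "foldr (\<lambda>j acc. dpow_free (letter (F j)) (b j) * acc) js 1 \<in> pos_span"
    if "\<forall>j\<in>set js. 1 \<le> j" for b js
    using that by (induct js) (auto simp: pos_span_1 dpow_free_def intro!: pos_span_times pos_span_const)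
  with \<open>0 < k\<close> show ?thesis
    unfolding kf_free_def by (intro pos_span_sum) (auto simp del: upt_Suc)
qed

lemma pos_span_times_letter: "x \<in> pos_span \<Longrightarrow> is_borel g \<Longrightarrow> 1 \<le> deg g \<Longrightarrow> x * letter g \<in> target k K"
  by (induction rule: pos_span.induct) (simp_all add: target.intros distrib_right mult.assoc)

definition targetU :: "nat \<Rightarrow> nat \<Rightarrow> Usl2 set" where
  "targetU k K = cls ` target k K"

lemma cls_in_targetU_iff: "cls x \<in> targetU k K \<longleftrightarrow> x \<in> target k K"
proof
  assume "cls x \<in> targetU k K"
  then obtain y where y: "y \<in> target k K" "cls x = cls y" by (auto simp: targetU_def)
  then have "y + (x - y) \<in> target k K"
    by (intro target_add[OF y(1)] target_rel_ideal) (simp add: cls_eq_iff)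
  then show "x \<in> target k K" by simp
qed (simp add: targetU_def)

lemma targetU_0: "0 \<in> targetU k K"
  using cls_in_targetU_iff[of 0] by (simp add: cls_0 target_rel_ideal rel_ideal_0)

lemma targetU_add: "a \<in> targetU k K \<Longrightarrow> b \<in> targetU k K \<Longrightarrow> a + b \<in> targetU k K"
  using ex_cls[of a] ex_cls[of b] by (auto simp: cls_in_targetU_iff target_add simp flip: cls_add)

lemma targetU_of_int_mult: "a \<in> targetU k K \<Longrightarrow> of_int c * a \<in> targetU k K"
  using ex_cls[of a]
  by (auto simp: cls_in_targetU_iff target_const simp flip: cls_of_int const_of_int cls_mult)

lemma targetU_diff: "a \<in> targetU k K \<Longrightarrow> b \<in> targetU k K \<Longrightarrow> a - b \<in> targetU k K"
  using targetU_add[of a k K "of_int (-1) * b"] targetU_of_int_mult[of b k K "-1"] by simp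

lemma targetU_sum: "(\<And>a. a \<in> A \<Longrightarrow> g a \<in> targetU k K) \<Longrightarrow> sum g A \<in> targetU k K"
  by (induction A rule: infinite_finite_induct) (auto intro: targetU_0 targetU_add)

lemma targetU_kf: "0 < r' \<Longrightarrow> 0 < s' \<Longrightarrow> k * r' + K \<le> r' + s' \<Longrightarrow> U.kf k r' s' \<in> targetU k K"
  using target_kf[of "[]" r' s' k K]
  by (simp add: pos_word_def word_Nil cls_in_targetU_iff flip: cls_kf_free)

lemma targetU_f_kf:
  "1 \<le> m \<Longrightarrow> 0 < r' \<Longrightarrow> 0 < s' \<Longrightarrow> k * r' + K \<le> r' + s' \<Longrightarrow> fU m * U.kf k r' s' \<in> targetU k K"
  using target_kf[of "[F m]" r' s' k K]
  by (simp add: pos_word_def cls_in_targetU_iff fU_def letter_def flip: cls_kf_free cls_mult)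

lemma targetU_kf_h: "0 < k \<Longrightarrow> 1 \<le> j \<Longrightarrow> U.kf k r' s' * hU j \<in> targetU k K"
  using pos_span_times_letter[OF kf_free_in_pos_span[of k r' s'], of "H j" k K]
  by (simp add: cls_in_targetU_iff hU_def flip: cls_kf_free cls_mult)
lemma targetU_of_nat_mult: "a \<in> targetU k K \<Longrightarrow> of_nat c * a \<in> targetU k K"
  using targetU_of_int_mult[of a k K "int c"] by simp

lemma targetU_sum_kf_h:
  assumes "0 < r" and "0 < k"
  shows "(\<Sum>j\<in>{k..s}. U.kf_int k (int r - 1) (int s - int j) * hU j) \<in> targetU k K"
proof (rule targetU_sum)
  fix j assume j: "j \<in> {k..s}"
  then have "U.kf_int k (int r - 1) (int s - int j) = U.kf k (r - 1) (s - j)"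
    using assms by (simp add: U.kf_int_def nat_diff_distrib of_nat_diff)
  then show "U.kf_int k (int r - 1) (int s - int j) * hU j \<in> targetU k K"
    using j assms by (simp add: targetU_kf_h)
qed

lemma targetU_kf_int_pred:
  assumes "0 < r" and "0 < s" and "0 < k" and "k * r + K \<le> r + s"
  shows "of_int c * U.kf_int k (int r - 1) (int s) \<in> targetU k K"
proof (cases "r = 1")
  case True
  then show ?thesis using assms by (simp add: U.kf_int_0_left targetU_0)
next
  case False
  then have "U.kf_int k (int r - 1) (int s) = U.kf k (r - 1) s"
    using assms by (simp add: U.kf_int_def nat_diff_distrib of_nat_diff)
  moreover have "k * (r - 1) + K \<le> r - 1 + s"
    using assms by (simp add: diff_mult_distrib2)
  ultimately show ?thesis
    using False assms by (intro targetU_of_int_mult) (simp add: targetU_kf)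
qed

text \<open>Only \<open>m \<le> 2k - 2\<close> contribute, and the bound on \<open>m\<close> is exactly what keeps
  \<open>kf(r - 2, s - m)\<close> inside the range \<open>k r' + K \<le> r' + s'\<close>.\<close>

lemma targetU_sum_low_f_kf:
  assumes "0 < r" and "0 < k" and "k * r + K \<le> r + s" and "k * r \<le> s"
  shows "(\<Sum>m\<in>{k..s}. of_nat (2 * k - 1 - m) * (fU m * U.kf_int k (int r - 2) (int s - int m)))
      \<in> targetU k K"
proof (rule targetU_sum)
  fix m assume m: "m \<in> {k..s}"
  show "of_nat (2 * k - 1 - m) * (fU m * U.kf_int k (int r - 2) (int s - int m)) \<in> targetU k K"
  proof (cases "m + 2 \<le> 2 * k \<and> 3 \<le> r")
    case True
    have "3 * k \<le> k * r" using True by simp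
    then have ms: "m < s" using True assms(4) by linarith
    then have "U.kf_int k (int r - 2) (int s - int m) = U.kf k (r - 2) (s - m)"
      using True by (simp add: U.kf_int_def nat_diff_distrib of_nat_diff)
    moreover have "k * (r - 2) + K \<le> r - 2 + (s - m)"
      using assms(3) True ms \<open>3 * k \<le> k * r\<close> diff_mult_distrib2[of k r 2] by linarith
    ultimately show ?thesis
      using True ms m assms(2) by (intro targetU_of_nat_mult) (simp add: targetU_f_kf)
  next
    case outside: False
    have "2 * k - 1 - m = 0 \<or> U.kf_int k (int r - 2) (int s - int m) = 0"
    proof (cases "r \<le> 2 \<and> m + 2 \<le> 2 * k")
      case True
      then have "r = 1 \<or> r = 2" using assms(1) by auto
      then show ?thesis using True assms(4) by (auto simp: U.kf_int_neg U.kf_int_0_left)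
    qed (use outside in auto)
    then show ?thesis by (auto simp: targetU_0)
  qed
qed

lemma commutator_e0_kf_in_targetU:
  assumes "0 < r" and "0 < s" and "0 < k" and "k * r + K \<le> r + s"
  shows "commutator (eU 0) (U.kf k r s) \<in> targetU k K"
proof (cases "s < k * r")
  case True
  then show ?thesis by (simp add: U.kf_eq_0 commutator_def targetU_0)
next
  case False
  then show ?thesis
    unfolding U.commutator_e0_kf[OF assms(3)]
    using assms by (intro targetU_diff targetU_sum_kf_h targetU_kf_int_pred targetU_sum_low_f_kf) auto
qed

theorem proposition2p5:
  fixes r s k K :: nat
  assumes "0 < r" and "0 < s" and "0 < k" and "k * r + K \<le> r + s"
  shows "fa_comm (fa_gen (E 0)) (kx F k r s) \<in> fa_span
          ({fa_mult (fa_mon u) (kx F k r' s') | u r' s'.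
               pos_word u \<and> 0 < r' \<and> 0 < s' \<and> k * r' + K \<le> r' + s'}
           \<union> {fa_mult (fa_mon u) (fa_gen g) | u g. pos_word u \<and> is_borel g \<and> 1 \<le> deg g}
           \<union> U_rels)"
proof -
  define x where "x = letter (E 0) * kf_free k r s - kf_free k r s * letter (E 0)"
  have "cls x = commutator (eU 0) (U.kf k r s)"
    by (simp add: x_def cls_diff cls_mult cls_kf_free eU_def commutator_def)
  then have "x \<in> target k K"
    using commutator_e0_kf_in_targetU[OF assms] by (simp flip: cls_in_targetU_iff)
  then have "fa_of x \<in> fa_span (target_gens k K \<union> U_rels)"
    by (rule fa_of_target)
  moreover have "fa_of x = fa_comm (fa_gen (E 0)) (kx F k r s)"
    by (simp add: x_def fa_of_diff fa_of_times fa_of_letter fa_of_kf_free fa_comm_def)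
  ultimately show ?thesis
    unfolding target_gens_def by simp
qed

end
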